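(* Let $n\ge 2$, $\sigma,\tau\in S_n$ and $x\in\{0,1,\ldots,n-2\}$. If $x\notin\{\sigma(n-1),\ \tau^{-1}\sigma(n-1)\}$, then $(\sigma^{\sf CT})^{-1}\tau^{\sf CT}(x)=\sigma^{-1}\tau(x)$.
   Context: $S_n$ is the symmetric group on $\{0,1,\ldots,n-1\}$, with composition from left to right: $\tau\sigma(x):=\sigma(\tau(x))$; thus $\sigma^{-1}\tau(x)=\tau(\sigma^{-1}(x))$ and $\tau^{-1}\sigma(n-1)=\sigma(\tau^{-1}(n-1))$. The contraction of $\sigma\in S_n$ is $\sigma^{\sf CT}\in S_{n-1}$ (on $\{0,\ldots,n-2\}$) defined by $\sigma^{\sf CT}(x)=\sigma(n-1)$ if $x=\sigma^{-1}(n-1)$ and $\sigma^{\sf CT}(x)=\sigma(x)$ otherwise (i.e. delete $n-1$ from the cycle notation of $\sigma$). *)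

theory Defs
  imports "HOL-Combinatorics.Permutations"
begin

text \<open>Permutations of {0,...,n-1} are functions nat => nat with sigma permutes {..<n}
  (identity outside). Contraction: delete n-1 from the cycle notation; the result
  permutes {..<n-1} (identity on all x >= n-1).\<close>

definition contraction :: "nat \<Rightarrow> (nat \<Rightarrow> nat) \<Rightarrow> (nat \<Rightarrow> nat)" where
  "contraction n \<sigma> = (\<lambda>x. if n - 1 \<le> x then x
                          else if x = inv \<sigma> (n - 1) then \<sigma> (n - 1)
                          else \<sigma> x)"

end

theory Submission
  imports Defs
begin

text \<open>The contraction of \<sigma> is \<sigma> composed with the transposition of \<open>n - 1\<close> and its
  preimage \<open>\<sigma>\<^sup>-\<^sup>1(n - 1)\<close>; it is therefore again a permutation, and it agrees with \<sigma> away from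
  \<open>n - 1\<close> and \<open>\<sigma>\<^sup>-\<^sup>1(n - 1)\<close>. The hypotheses say exactly that \<open>y = \<sigma>\<^sup>-\<^sup>1(x)\<close> avoids \<open>n - 1\<close>,
  \<open>\<sigma>\<^sup>-\<^sup>1(n - 1)\<close> and \<open>\<tau>\<^sup>-\<^sup>1(n - 1)\<close>, so both contractions act on \<open>y\<close> like \<sigma> and \<tau>.\<close>

lemma contraction_eq_comp_transpose:
  assumes "\<sigma> permutes {..<n}"
  shows "contraction n \<sigma> = \<sigma> \<circ> transpose (inv \<sigma> (n - 1)) (n - 1)"
proof
  fix x
  have "\<sigma> (inv \<sigma> (n - 1)) = n - 1"
    using assms by (rule permutes_inverses)
  moreover have "inv \<sigma> (n - 1) \<le> n - 1"
    using permutes_in_image[OF permutes_inv[OF assms], of "n - 1"]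
      permutes_not_in[OF permutes_inv[OF assms], of "n - 1"]
    by (cases "n = 0") auto
  moreover have "\<sigma> x = x" if "n \<le> x"
    using assms that by (simp add: permutes_not_in)
  ultimately show "contraction n \<sigma> x = (\<sigma> \<circ> transpose (inv \<sigma> (n - 1)) (n - 1)) x"
    by (cases "x = n - 1"; cases "x = inv \<sigma> (n - 1)") (auto simp: contraction_def)
qed

lemma contraction_permutes:
  assumes "\<sigma> permutes {..<n}"
  shows "contraction n \<sigma> permutes {..<n - 1}"
proof (rule permutes_superset)
  have "transpose (inv \<sigma> (n - 1)) (n - 1) permutes {..<n}"
  proof (cases "n = 0")
    case True
    then have "inv \<sigma> (n - 1) = n - 1"
      using permutes_not_in[OF permutes_inv[OF assms]] by simp
    then show ?thesis
      by simp
  next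
    case False
    then show ?thesis
      using permutes_in_image[OF permutes_inv[OF assms], of "n - 1"]
      by (simp add: permutes_swap_id)
  qed
  then show "contraction n \<sigma> permutes {..<n}"
    unfolding contraction_eq_comp_transpose[OF assms]
    using assms by (rule permutes_compose)
  show "contraction n \<sigma> x = x" if "x \<in> {..<n} - {..<n - 1}" for x
    using that by (simp add: contraction_def)
qed

lemma contraction_apply:
  assumes "x < n - 1" and "x \<noteq> inv \<sigma> (n - 1)"
  shows "contraction n \<sigma> x = \<sigma> x"
  using assms by (simp add: contraction_def)

lemma inv_contraction_apply:
  assumes "\<sigma> permutes {..<n}" and "y < n - 1" and "y \<noteq> inv \<sigma> (n - 1)"
  shows "inv (contraction n \<sigma>) (\<sigma> y) = y"
  using assms by (simp add: permutes_inv_eq[OF contraction_permutes] contraction_apply)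

theorem lemma4p3:
  fixes n :: nat and \<sigma> \<tau> :: "nat \<Rightarrow> nat" and x :: nat
  assumes "n \<ge> 2"
    and "\<sigma> permutes {..<n}" and "\<tau> permutes {..<n}"
    and "x \<le> n - 2"
    and "x \<notin> {\<sigma> (n - 1), \<sigma> (inv \<tau> (n - 1))}"
  shows "contraction n \<tau> (inv (contraction n \<sigma>) x) = \<tau> (inv \<sigma> x)"
proof -
  define y where "y = inv \<sigma> x"
  have x_eq: "x = \<sigma> y"
    unfolding y_def using assms(2) by (simp add: permutes_inverses)
  have "y < n"
    using assms(1,2,4) permutes_in_image[OF permutes_inv[OF assms(2)], of x]
    by (simp add: y_def)
  moreover have "y \<noteq> n - 1" and "y \<noteq> inv \<tau> (n - 1)"
    using assms(5) x_eq by auto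
  ultimately have y_less: "y < n - 1"
    by simp
  have "y \<noteq> inv \<sigma> (n - 1)"
    using assms(1,2,4) x_eq by (auto simp: permutes_inverses)
  then have "inv (contraction n \<sigma>) x = y"
    using assms(2) y_less x_eq by (simp add: inv_contraction_apply)
  then show ?thesis
    using y_less \<open>y \<noteq> inv \<tau> (n - 1)\<close> y_def by (simp add: contraction_apply)
qed

end
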